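(* Let $\mathbb{K}$ be a field of characteristic $0$. For a positive integer $r$, let $\mu(r)$ be the least integer $h$ such that $(1,r,h,r,1)$ is the Hilbert function of a standard graded Artinian Gorenstein $\mathbb{K}$-algebra, and let $\delta(r)=r-\mu(r)$. Then for every integer $m\geq 3$, \[\delta\!\left(m+\binom{m+2}{3}\right)\geq\binom{m}{3}.\]
   Context: Standard graded Artinian Gorenstein algebras $Q/I$ are taken with $I$ containing no linear forms, so the codimension equals $h_1$. *)

theory Defs
  imports Main "HOL.Vector_Spaces" "HOL-Library.Poly_Mapping"
begin

text \<open>Polynomials over a field 'k in the variables x_0, x_1, ... :
  finitely supported maps from monomials (exponent vectors nat \<Rightarrow>0 nat) to coefficients.
  The standard graded polynomial ring Q = k[x_0,...,x_{n-1}] is the subset poly_ring n.\<close>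

type_synonym 'k mpol = "(nat \<Rightarrow>\<^sub>0 nat) \<Rightarrow>\<^sub>0 'k"

definition mdeg :: "(nat \<Rightarrow>\<^sub>0 nat) \<Rightarrow> nat" where
  "mdeg m = (\<Sum>j\<in>Poly_Mapping.keys m. Poly_Mapping.lookup m j)"

definition var :: "nat \<Rightarrow> 'k::field mpol" where
  "var j = Poly_Mapping.single (Poly_Mapping.single j 1) 1"

definition const :: "'k::field \<Rightarrow> 'k mpol" where
  "const c = Poly_Mapping.single 0 c"

definition smul :: "'k::field \<Rightarrow> 'k mpol \<Rightarrow> 'k mpol" where
  "smul c p = const c * p"

definition kdim :: "'k::field mpol set \<Rightarrow> nat" where
  "kdim V = vector_space.dim (smul :: 'k \<Rightarrow> 'k mpol \<Rightarrow> 'k mpol) V"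

definition poly_ring :: "nat \<Rightarrow> 'k::field mpol set" where
  "poly_ring n = {p. \<forall>m\<in>Poly_Mapping.keys p. Poly_Mapping.keys m \<subseteq> {..<n}}"

definition hom_part :: "nat \<Rightarrow> nat \<Rightarrow> 'k::field mpol set" where
  "hom_part n d = {p \<in> poly_ring n. \<forall>m\<in>Poly_Mapping.keys p. mdeg m = d}"

definition hcomp :: "nat \<Rightarrow> 'k::field mpol \<Rightarrow> 'k mpol" where
  "hcomp d p = Abs_poly_mapping (\<lambda>m. if mdeg m = d then Poly_Mapping.lookup p m else 0)"

definition is_ideal :: "nat \<Rightarrow> 'k::field mpol set \<Rightarrow> bool" where
  "is_ideal n I \<longleftrightarrow> I \<subseteq> poly_ring n \<and> 0 \<in> I \<and>
     (\<forall>p\<in>I. \<forall>q\<in>I. p + q \<in> I) \<and> (\<forall>p\<in>I. \<forall>q\<in>poly_ring n. q * p \<in> I)"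

definition is_homogeneous_ideal :: "nat \<Rightarrow> 'k::field mpol set \<Rightarrow> bool" where
  "is_homogeneous_ideal n I \<longleftrightarrow> is_ideal n I \<and> (\<forall>p\<in>I. \<forall>d. hcomp d p \<in> I)"

text \<open>Hilbert function of Q/I: h(d) = dim_k Q_d - dim_k (I \<inter> Q_d) = dim_k (Q/I)_d.\<close>
definition hilb :: "nat \<Rightarrow> 'k::field mpol set \<Rightarrow> nat \<Rightarrow> nat" where
  "hilb n I d = kdim (hom_part n d :: 'k mpol set) - kdim (I \<inter> hom_part n d)"

definition artinian :: "nat \<Rightarrow> 'k::field mpol set \<Rightarrow> bool" where
  "artinian n I \<longleftrightarrow> (\<exists>D. \<forall>d\<ge>D. hom_part n d \<subseteq> I)"

text \<open>Degree-d part of the socle (0 :_{Q/I} m), lifted to Q: elements f of Q_d with x_j f \<in> I for all j.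
  Its image in (Q/I)_d has dimension kdim(socle_lift n I d) - kdim(I \<inter> Q_d).\<close>
definition socle_lift :: "nat \<Rightarrow> 'k::field mpol set \<Rightarrow> nat \<Rightarrow> 'k mpol set" where
  "socle_lift n I d = {f \<in> hom_part n d. \<forall>j<n. var j * f \<in> I}"

text \<open>Standard graded Artinian Gorenstein algebra Q/I (I homogeneous, proper): Artinian and the
  (graded) socle of Q/I is one-dimensional; since the socle of Q/I is graded and vanishes in
  degrees where (Q/I)_d = 0, its dimension is the finite sum over d < D below.\<close>
definition graded_AG :: "nat \<Rightarrow> 'k::field mpol set \<Rightarrow> bool" where
  "graded_AG n I \<longleftrightarrow> is_homogeneous_ideal n I \<and> const 1 \<notin> I \<and>
     (\<exists>D. (\<forall>d\<ge>D. hom_part n d \<subseteq> I) \<and>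
          (\<Sum>d<D. kdim (socle_lift n I d) - kdim (I \<inter> hom_part n d)) = 1)"

text \<open>(1,r,h,r,1) is the Hilbert function of a standard graded Artinian Gorenstein k-algebra Q/I,
  Q = k[x_0..x_{r-1}] (I has no linear forms, so the codimension is h_1 = r).\<close>
definition AG_hilb_realizable :: "'k::field itself \<Rightarrow> nat \<Rightarrow> nat \<Rightarrow> bool" where
  "AG_hilb_realizable _ r h \<longleftrightarrow> (\<exists>I :: 'k mpol set. graded_AG r I \<and>
     hilb r I 0 = 1 \<and> hilb r I 1 = r \<and> hilb r I 2 = h \<and> hilb r I 3 = r \<and> hilb r I 4 = 1 \<and>
     (\<forall>d>4. hilb r I d = 0))"

definition mu :: "'k::field itself \<Rightarrow> nat \<Rightarrow> nat" where
  "mu K r = (LEAST h. AG_hilb_realizable K r h)"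

definition delta :: "'k::field itself \<Rightarrow> nat \<Rightarrow> int" where
  "delta K r = int r - int (mu K r)"

end

theory Submission
  imports Defs "HOL-Library.Multiset"
begin

(* Let x_0, ..., x_(m-1) be variables and add one new variable y_t for each of the binom(m+2,3)
   cubic monomials x^t, so that there are r = m + binom(m+2,3) variables. Put F = sum_t x^t y_t
   and let I = Ann(F) be its annihilator under contraction (Macaulay's inverse systems). Then Q/I
   is graded Artinian Gorenstein of socle degree 4 with Hilbert function (1, r, h_2, r, 1): in
   degrees 1 and 3 all r monomials survive, since x_i is detected by x_i^2 y_(x_i^3) and y_t by x^t.
   In degree 2, the contraction of F by a quadric in the x's is one of binom(m+1,2) forms, and the
   contraction by a quadric involving some y is a quadric in the x's. Hence
   h_2 <= 2 binom(m+1,2) = m(m+1), so mu(r) <= m(m+1) and delta(r) >= r - m(m+1) = binom(m,3). *)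

section \<open>Rank-nullity for finitely spanned subspaces\<close>

context vector_space
begin

lemma card_le_dim_if_finitely_spanned:
  assumes "independent B" "B \<subseteq> V" "V \<subseteq> span W" "finite W"
  shows "card B \<le> dim V"
proof -
  obtain B' where B': "B \<subseteq> B'" "B' \<subseteq> V" "independent B'" "V \<subseteq> span B'"
    using maximal_independent_subset_extend[OF assms(2,1)] by blast
  have "finite B'"
    using independent_span_bound[OF assms(4) B'(3)] B'(2) assms(3) by auto
  then have "card B \<le> card B'"
    using B'(1) card_mono by blast
  also have "card B' = dim V"
    using basis_card_eq_dim B' by blast
  finally show ?thesis .
qed

lemma span_inter_span_disjoint:
  assumes "independent B" "X \<subseteq> B" "Y \<subseteq> B" "X \<inter> Y = {}"
    and "x \<in> span X" "x \<in> span Y"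
  shows "x = 0"
proof -
  have "representation B x = representation X x" "representation B x = representation Y x"
    using representation_extend assms by blast+
  then have "representation B x = (\<lambda>_. 0)"
    using representation_ne_zero[of X x] representation_ne_zero[of Y x] assms(4) by fastforce
  moreover have "x \<in> span B"
    using assms(2,5) span_mono by blast
  ultimately show ?thesis
    using sum_nonzero_representation_eq[OF assms(1)] by fastforce
qed

lemma dim_eq_dim_kernel_add_dim_image:
  assumes V: "subspace V" and "V \<subseteq> span W" "finite W"
    and f: "Vector_Spaces.linear scale scale f"
  shows "dim V = dim {v \<in> V. f v = 0} + dim (f ` V)"
proof -
  \<comment> \<open>extend a basis of the kernel to a basis B of V; f maps the new vectors to a basis of f ` V\<close>
  interpret f: linear scale scale f by fact
  let ?K = "{v \<in> V. f v = 0}"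
  obtain BK where BK: "BK \<subseteq> ?K" "independent BK" "?K \<subseteq> span BK" "card BK = dim ?K"
    by (rule basis_exists)
  obtain B where B: "BK \<subseteq> B" "B \<subseteq> V" "independent B" "V \<subseteq> span B"
    using maximal_independent_subset_extend[of BK V] BK(1,2) by blast
  have "finite B"
    using independent_span_bound[OF assms(3) B(3)] B(2) assms(2) by auto
  define C where "C = B - BK"
  have "inj_on f (span C)"
    unfolding f.inj_on_iff_eq_0[OF subspace_span]
  proof (intro ballI impI)
    fix x assume "x \<in> span C" "f x = 0"
    moreover have "span C \<subseteq> V"
      using span_minimal[OF _ V] B(2) C_def by blast
    ultimately have "x \<in> span BK"
      using BK(3) by blast
    then show "x = 0"
      using span_inter_span_disjoint[OF B(3) _ B(1)] \<open>x \<in> span C\<close> C_def by blast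
  qed
  then have "independent (f ` C)" "card (f ` C) = card C"
    using f.independent_injective_image[of C] B(3) dependent_mono[of C B] C_def
      card_image[OF inj_on_subset[OF _ span_superset]] by auto
  moreover have "f ` V \<subseteq> span (f ` C)"
  proof -
    have "f ` B \<subseteq> insert 0 (f ` C)"
      using BK(1) C_def by auto
    then have "span (f ` B) \<subseteq> span (f ` C)"
      by (metis span_insert_0 span_mono)
    then show ?thesis
      using f.spans_image[OF B(4)] by blast
  qed
  moreover have "f ` C \<subseteq> f ` V"
    using B(2) C_def by blast
  ultimately have "dim (f ` V) = card B - card BK"
    using basis_card_eq_dim[of "f ` C" "f ` V"] C_def
      card_Diff_subset[OF finite_subset[OF B(1) \<open>finite B\<close>] B(1)] by simp
  moreover have "card B = dim V"
    using basis_card_eq_dim B by blast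
  ultimately show ?thesis
    using BK(4) card_mono[OF \<open>finite B\<close> B(1)] by simp
qed

end

lemma lookup_single_mult:
  fixes p :: "'k::field mpol"
  shows "Poly_Mapping.lookup (Poly_Mapping.single c v * p) s =
    (if \<exists>b. s = c + b then v * Poly_Mapping.lookup p (s - c) else 0)"
proof -
  have "Poly_Mapping.lookup (Poly_Mapping.single c v * p) s =
      (\<Sum>l. if c = l then v * (\<Sum>q. Poly_Mapping.lookup p q when s = l + q) else 0)"
    unfolding lookup_mult lookup_single by (intro Sum_any.cong) (simp add: when_def)
  also have "\<dots> = v * (\<Sum>q. Poly_Mapping.lookup p q when s = c + q)"
    by simp
  also have "(\<Sum>q. Poly_Mapping.lookup p q when s = c + q) =
      (if \<exists>b. s = c + b then Poly_Mapping.lookup p (s - c) else 0)"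
  proof (cases "\<exists>b. s = c + b")
    case True
    then obtain b where b: "s = c + b" by blast
    have "(\<Sum>q. Poly_Mapping.lookup p q when s = c + q) = (\<Sum>q. Poly_Mapping.lookup p q when q = b)"
      by (intro Sum_any.cong) (auto simp: when_def b)
    then show ?thesis using b by simp
  qed (simp add: when_def)
  finally show ?thesis by simp
qed

lemma lookup_smul: "Poly_Mapping.lookup (smul c p) a = c * Poly_Mapping.lookup p a"
  unfolding smul_def const_def by (simp add: lookup_single_mult)

interpretation mpol: vector_space "smul :: 'k::field \<Rightarrow> 'k mpol \<Rightarrow> 'k mpol"
  by unfold_locales (auto intro!: poly_mapping_eqI simp: lookup_smul lookup_add algebra_simps)

lemma kdim_eq_dim: "kdim V = mpol.dim V"
  unfolding kdim_def ..

abbreviation monomial :: "(nat \<Rightarrow>\<^sub>0 nat) \<Rightarrow> 'k::field mpol" where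
  "monomial a \<equiv> Poly_Mapping.single a 1"

lemma smul_single_one: "smul c (Poly_Mapping.single a 1) = Poly_Mapping.single a c"
  by (rule poly_mapping_eqI) (simp add: lookup_smul lookup_single when_def)

lemma keys_add_nat:
  "Poly_Mapping.keys (a + b :: 'a \<Rightarrow>\<^sub>0 nat) = Poly_Mapping.keys a \<union> Poly_Mapping.keys b"
  by (auto simp: in_keys_iff lookup_add)

lemma mdeg_add: "mdeg (a + b) = mdeg a + mdeg b"
  unfolding mdeg_def by (rule setsum_keys_plus_distrib) auto

lemma mdeg_single [simp]: "mdeg (Poly_Mapping.single i k) = k"
  unfolding mdeg_def by (cases "k = 0") auto

lemma mdeg_zero [simp]: "mdeg 0 = 0"
  by (simp add: mdeg_def)

lemma mdeg_eq_0_iff [simp]: "mdeg a = 0 \<longleftrightarrow> a = 0"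
  unfolding mdeg_def by (auto simp: in_keys_iff simp flip: keys_eq_empty)

definition monomials :: "nat \<Rightarrow> nat \<Rightarrow> (nat \<Rightarrow>\<^sub>0 nat) set" where
  "monomials n d = {a. mdeg a = d \<and> Poly_Mapping.keys a \<subseteq> {..<n}}"

lemma monomials_0 [simp]: "monomials n 0 = {0}"
  by (auto simp: monomials_def)

lemma bij_betw_multisets_of_size_monomials:
  "bij_betw (\<lambda>M. Abs_poly_mapping (count M)) (multisets_of_size {..<n} d) (monomials n d)"
proof (rule bij_betw_byWitness[where f' = "\<lambda>a. Abs_multiset (Poly_Mapping.lookup a)"])
  have count: "Poly_Mapping.lookup (Abs_poly_mapping (count M)) = count M" for M :: "nat multiset"
    by (simp add: count_eq_zero_iff)
  have lookup: "count (Abs_multiset (Poly_Mapping.lookup a)) = Poly_Mapping.lookup a"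
    for a :: "nat \<Rightarrow>\<^sub>0 nat"
    by (simp add: in_keys_iff[symmetric])
  have keys: "Poly_Mapping.keys (Abs_poly_mapping (count M)) = set_mset M" for M :: "nat multiset"
    by (auto simp: in_keys_iff count)
  have size: "mdeg (Abs_poly_mapping (count M)) = size M" for M :: "nat multiset"
    unfolding mdeg_def keys count size_multiset_overloaded_eq ..
  show "\<forall>M\<in>multisets_of_size {..<n} d. Abs_multiset (Poly_Mapping.lookup (Abs_poly_mapping (count M))) = M"
    by (simp add: count)
  show "\<forall>a\<in>monomials n d. Abs_poly_mapping (count (Abs_multiset (Poly_Mapping.lookup a))) = a"
    by (simp add: lookup)
  show "(\<lambda>M. Abs_poly_mapping (count M)) ` multisets_of_size {..<n} d \<subseteq> monomials n d"
    by (auto simp: multisets_of_size_def monomials_def keys size)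
  show "(\<lambda>a. Abs_multiset (Poly_Mapping.lookup a)) ` monomials n d \<subseteq> multisets_of_size {..<n} d"
  proof
    fix M assume "M \<in> (\<lambda>a. Abs_multiset (Poly_Mapping.lookup a)) ` monomials n d"
    then obtain a where a: "a \<in> monomials n d" "M = Abs_multiset (Poly_Mapping.lookup a)"
      by blast
    then have "Abs_poly_mapping (count M) = a"
      by (simp add: lookup)
    then show "M \<in> multisets_of_size {..<n} d"
      using a(1) keys[of M] size[of M] by (auto simp: multisets_of_size_def monomials_def)
  qed
qed

lemma card_monomials: "card (monomials n d) = (n + d - 1) choose d"
  using bij_betw_same_card[OF bij_betw_multisets_of_size_monomials] card_multisets_of_size[of "{..<n}"]
  by simp

lemma finite_monomials [simp]: "finite (monomials n d)"
  using bij_betw_finite[OF bij_betw_multisets_of_size_monomials] by blast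

lemma two_mult_choose_two: "2 * (n choose 2) = n * (n - 1)"
  by (induction n) (auto simp: numeral_eq_Suc algebra_simps)

lemma single_in_monomials: "i < n \<Longrightarrow> Poly_Mapping.single i d \<in> monomials n d"
  by (simp add: monomials_def)

lemma single_eq_single_iff:
  "(k::nat) \<noteq> 0 \<Longrightarrow> Poly_Mapping.single i k = Poly_Mapping.single j k \<longleftrightarrow> i = j"
  by (metis lookup_single_eq lookup_single_not_eq)

lemma single_add_diff_single:
  "j \<in> Poly_Mapping.keys (c :: 'a \<Rightarrow>\<^sub>0 nat) \<Longrightarrow> c - Poly_Mapping.single j 1 + Poly_Mapping.single j 1 = c"
  by (rule poly_mapping_eqI) (auto simp: lookup_add lookup_minus lookup_single when_def in_keys_iff)

lemma sum_monomials_eq: "(\<Sum>a\<in>Poly_Mapping.keys p. smul (Poly_Mapping.lookup p a) (monomial a)) = p"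
  by (rule poly_mapping_eqI)
    (auto simp: smul_single_one lookup_sum lookup_single when_def in_keys_iff)

lemma in_span_monomials_keys: "p \<in> mpol.span (monomial ` Poly_Mapping.keys p)"
  by (subst sum_monomials_eq[symmetric])
    (intro mpol.span_sum mpol.span_scale mpol.span_base imageI)

lemma poly_ring_mult: "p \<in> poly_ring n \<Longrightarrow> q \<in> poly_ring n \<Longrightarrow> p * q \<in> poly_ring n"
  unfolding poly_ring_def using keys_mult[of p q] by (force simp: keys_add_nat)

lemma poly_ring_add: "p \<in> poly_ring n \<Longrightarrow> q \<in> poly_ring n \<Longrightarrow> p + q \<in> poly_ring n"
  unfolding poly_ring_def using keys_add[of p q] by blast

lemma var_in_poly_ring: "j < n \<Longrightarrow> var j \<in> poly_ring n"
  unfolding var_def poly_ring_def by simp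

lemma lookup_hcomp:
  "Poly_Mapping.lookup (hcomp d p) a = (if mdeg a = d then Poly_Mapping.lookup p a else 0)"
proof -
  have "finite {a. (if mdeg a = d then Poly_Mapping.lookup p a else 0) \<noteq> 0}"
    by (rule finite_subset[of _ "Poly_Mapping.keys p"]) (auto simp: in_keys_iff)
  then show ?thesis
    unfolding hcomp_def by simp
qed

lemma hcomp_in_poly_ring: "p \<in> poly_ring n \<Longrightarrow> hcomp d p \<in> poly_ring n"
  by (auto simp: poly_ring_def in_keys_iff lookup_hcomp split: if_splits)

lemma monomial_in_hom_part: "a \<in> monomials n d \<Longrightarrow> monomial a \<in> hom_part n d"
  by (simp add: hom_part_def poly_ring_def monomials_def)

lemma var_mult_in_hom_part:
  assumes "j < n" "f \<in> hom_part n d"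
  shows "var j * f \<in> hom_part n (Suc d)"
proof -
  have "var j * f \<in> poly_ring n"
    using poly_ring_mult var_in_poly_ring assms hom_part_def by blast
  moreover have "mdeg a = Suc d" if "a \<in> Poly_Mapping.keys (var j * f)" for a
    using keys_mult[of "var j" f] that assms(2) by (auto simp: var_def hom_part_def mdeg_add)
  ultimately show ?thesis
    by (simp add: hom_part_def)
qed

lemma subspace_hom_part: "mpol.subspace (hom_part n d)"
  unfolding mpol.subspace_def
proof (intro conjI ballI allI)
  show "0 \<in> hom_part n d"
    by (simp add: hom_part_def poly_ring_def)
  fix p q :: "'k::field mpol" and c
  assume p: "p \<in> hom_part n d"
  have "Poly_Mapping.keys (smul c p) \<subseteq> Poly_Mapping.keys p"
    by (auto simp: in_keys_iff lookup_smul)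
  then show "smul c p \<in> hom_part n d"
    using p by (auto simp: hom_part_def poly_ring_def)
  assume "q \<in> hom_part n d"
  then show "p + q \<in> hom_part n d"
    using p keys_add[of p q] unfolding hom_part_def poly_ring_def by blast
qed

lemma hom_part_subset_span_monomials: "hom_part n d \<subseteq> mpol.span (monomial ` monomials n d)"
proof
  fix p :: "'k::field mpol" assume "p \<in> hom_part n d"
  then have "monomial ` Poly_Mapping.keys p \<subseteq> (monomial ` monomials n d :: 'k mpol set)"
    by (auto simp: hom_part_def poly_ring_def monomials_def)
  then show "p \<in> mpol.span (monomial ` monomials n d)"
    using in_span_monomials_keys mpol.span_mono by blast
qed

lemma hilb_le_card_monomials: "hilb n (I :: 'k::field mpol set) d \<le> card (monomials n d)"
proof -
  have "kdim (hom_part n d :: 'k mpol set) \<le> card (monomial ` monomials n d :: 'k mpol set)"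
    unfolding kdim_eq_dim by (intro mpol.dim_le_card hom_part_subset_span_monomials) simp
  also have "\<dots> \<le> card (monomials n d)"
    by (rule card_image_le) simp
  finally show ?thesis
    unfolding hilb_def by linarith
qed

lemma monomial_mult_eq_mult_var:
  assumes "j \<in> Poly_Mapping.keys c"
  shows "monomial c * f = monomial (c - Poly_Mapping.single j 1) * (var j * (f :: 'k::field mpol))"
proof -
  have "monomial (c - Poly_Mapping.single j 1) * var j = (monomial c :: 'k mpol)"
    unfolding var_def mult_single single_add_diff_single[OF assms] by simp
  then show ?thesis
    by (simp add: mult.assoc[symmetric])
qed

section \<open>Inverse systems generated by a sum of monomials\<close>

(* The form F = sum_(s in S) X^[s] is encoded by the finite set S of its (divided power)
   monomials. pairing S p is the constant term of the contraction p o F, contraction S p is p o F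
   with X^[c] written as the monomial c, and annihilator n S is Ann(F). *)
definition pairing :: "(nat \<Rightarrow>\<^sub>0 nat) set \<Rightarrow> 'k::field mpol \<Rightarrow> 'k" where
  "pairing S p = (\<Sum>s\<in>S. Poly_Mapping.lookup p s)"

definition contraction :: "(nat \<Rightarrow>\<^sub>0 nat) set \<Rightarrow> 'k::field mpol \<Rightarrow> 'k mpol" where
  "contraction S p = Abs_poly_mapping (\<lambda>c. pairing S (monomial c * p))"

definition annihilator :: "nat \<Rightarrow> (nat \<Rightarrow>\<^sub>0 nat) set \<Rightarrow> 'k::field mpol set" where
  "annihilator n S = {p \<in> poly_ring n. \<forall>q. pairing S (q * p) = 0}"

lemma pairing_add: "pairing S (p + q) = pairing S p + pairing S q"
  unfolding pairing_def by (simp add: lookup_add sum.distrib)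

lemma pairing_zero [simp]: "pairing S 0 = 0"
  unfolding pairing_def by simp

lemma pairing_sum: "pairing S (sum f A) = (\<Sum>a\<in>A. pairing S (f a))"
  unfolding pairing_def by (simp add: lookup_sum sum.swap[of _ S])

lemma pairing_single_mult:
  "pairing S (Poly_Mapping.single c v * p) = v * pairing S (monomial c * p)"
  unfolding pairing_def lookup_single_mult by (simp add: sum_distrib_left if_distrib cong: if_cong)

lemma pairing_mult:
  "pairing S (q * p) = (\<Sum>c\<in>Poly_Mapping.keys q. Poly_Mapping.lookup q c * pairing S (monomial c * p))"
proof -
  have "q * p = (\<Sum>c\<in>Poly_Mapping.keys q. Poly_Mapping.single c (Poly_Mapping.lookup q c)) * p"
    using sum_monomials_eq[of q] by (simp add: smul_single_one)
  also have "\<dots> = (\<Sum>c\<in>Poly_Mapping.keys q. Poly_Mapping.single c (Poly_Mapping.lookup q c) * p)"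
    by (rule sum_distrib_right)
  finally have "pairing S (q * p) =
      (\<Sum>c\<in>Poly_Mapping.keys q. pairing S (Poly_Mapping.single c (Poly_Mapping.lookup q c) * p))"
    by (simp only: pairing_sum)
  also have "\<dots> = (\<Sum>c\<in>Poly_Mapping.keys q. Poly_Mapping.lookup q c * pairing S (monomial c * p))"
    by (rule sum.cong[OF refl]) (rule pairing_single_mult)
  finally show ?thesis .
qed

lemma in_annihilator_iff:
  "p \<in> annihilator n S \<longleftrightarrow> p \<in> poly_ring n \<and> (\<forall>c. pairing S (monomial c * p) = 0)"
proof -
  have "pairing S (q * p) = 0" if "\<forall>c. pairing S (monomial c * p) = 0" for q
    using that by (subst pairing_mult) simp
  then show ?thesis
    unfolding annihilator_def by blast
qed

lemma pairing_monomial: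
  "finite S \<Longrightarrow> pairing S (monomial a :: 'k::field mpol) = (if a \<in> S then 1 else 0)"
  unfolding pairing_def by (simp add: lookup_single when_def)

lemma pairing_monomial_mult_neq_0E:
  assumes "pairing S (monomial c * p) \<noteq> 0"
  obtains b where "c + b \<in> S" "b \<in> Poly_Mapping.keys p"
proof -
  have "(\<Sum>s\<in>S. if \<exists>b. s = c + b then Poly_Mapping.lookup p (s - c) else 0) \<noteq> 0"
    using assms unfolding pairing_def lookup_single_mult by (simp cong: if_cong)
  then obtain s where "s \<in> S" "(if \<exists>b. s = c + b then Poly_Mapping.lookup p (s - c) else 0) \<noteq> 0"
    by (rule sum.not_neutral_contains_not_neutral)
  then show ?thesis
    using that by (auto simp: in_keys_iff split: if_splits)
qed

lemma lookup_contraction: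
  assumes "finite S"
  shows "Poly_Mapping.lookup (contraction S p) c = pairing S (monomial c * p)"
proof -
  have "{c. pairing S (monomial c * p) \<noteq> 0} \<subseteq> (\<lambda>(s, b). s - b) ` (S \<times> Poly_Mapping.keys p)"
  proof
    fix c assume "c \<in> {c. pairing S (monomial c * p) \<noteq> 0}"
    then have "pairing S (monomial c * p) \<noteq> 0"
      by simp
    then obtain b where "c + b \<in> S" "b \<in> Poly_Mapping.keys p"
      by (rule pairing_monomial_mult_neq_0E)
    then show "c \<in> (\<lambda>(s, b). s - b) ` (S \<times> Poly_Mapping.keys p)"
      by (intro image_eqI[of _ _ "(c + b, b)"]) simp_all
  qed
  then have "finite {c. pairing S (monomial c * p) \<noteq> 0}"
    by (rule finite_subset) (simp add: assms)
  then show ?thesis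
    unfolding contraction_def by simp
qed

lemma lookup_contraction_monomial:
  "finite S \<Longrightarrow> Poly_Mapping.lookup (contraction S (monomial a :: 'k::field mpol)) c =
    (if a + c \<in> S then 1 else 0)"
  by (simp add: lookup_contraction mult_single pairing_monomial add.commute)

lemma linear_contraction:
  assumes "finite S"
  shows "Vector_Spaces.linear smul smul (contraction S :: 'k::field mpol \<Rightarrow> 'k mpol)"
proof -
  have "contraction S (p + q) = contraction S p + contraction S q" for p q :: "'k mpol"
    by (rule poly_mapping_eqI) (simp only: lookup_contraction[OF assms] lookup_add distrib_left pairing_add)
  moreover have "contraction S (smul k p) = smul k (contraction S p)" for k and p :: "'k mpol"
  proof (rule poly_mapping_eqI)
    fix c
    have "monomial c * smul k p = Poly_Mapping.single c k * p"
      unfolding smul_def const_def by (simp add: mult.assoc[symmetric] mult_single)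
    then have "pairing S (monomial c * smul k p) = k * pairing S (monomial c * p)"
      using pairing_single_mult by metis
    then show "Poly_Mapping.lookup (contraction S (smul k p)) c = Poly_Mapping.lookup (smul k (contraction S p)) c"
      by (simp only: lookup_contraction[OF assms] lookup_smul)
  qed
  ultimately show ?thesis
    unfolding linear_iff using mpol.vector_space_axioms by blast
qed

lemma contraction_monomial_in_span:
  assumes "finite S" "\<And>c. a + c \<in> S \<Longrightarrow> c \<in> C"
  shows "contraction S (monomial a :: 'k::field mpol) \<in> mpol.span (monomial ` C)"
proof -
  have "Poly_Mapping.keys (contraction S (monomial a :: 'k mpol)) \<subseteq> C"
    using assms by (auto simp: in_keys_iff lookup_contraction_monomial split: if_splits)
  then show ?thesis
    using in_span_monomials_keys mpol.span_mono[OF image_mono] by blast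
qed

definition dual_pairs :: "(nat \<Rightarrow>\<^sub>0 nat) set \<Rightarrow> ((nat \<Rightarrow>\<^sub>0 nat) \<times> (nat \<Rightarrow>\<^sub>0 nat)) set \<Rightarrow> bool" where
  "dual_pairs S P \<longleftrightarrow> (\<forall>p\<in>P. \<forall>q\<in>P. fst p + snd q \<in> S \<longleftrightarrow> p = q)"

lemma dual_pairs_swap: "dual_pairs S P \<Longrightarrow> dual_pairs S (prod.swap ` P)"
  unfolding dual_pairs_def by (auto simp: add.commute)

locale monomial_inverse_system =
  fixes n D :: nat and S :: "(nat \<Rightarrow>\<^sub>0 nat) set"
  assumes S_subset: "S \<subseteq> monomials n D" and S_nonempty: "S \<noteq> {}"
begin

lemma finite_S: "finite S"
  using S_subset finite_monomials by (rule finite_subset)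

lemma mdeg_S: "s \<in> S \<Longrightarrow> mdeg s = D"
  using S_subset unfolding monomials_def by blast

lemma keys_S: "s \<in> S \<Longrightarrow> Poly_Mapping.keys s \<subseteq> {..<n}"
  using S_subset unfolding monomials_def by blast

lemma pairing_hcomp:
  "pairing S (monomial c * hcomp d p) = (if mdeg c + d = D then pairing S (monomial c * p) else 0)"
proof -
  have "(if \<exists>b. s = c + b then Poly_Mapping.lookup (hcomp d p) (s - c) else 0) =
      (if mdeg c + d = D then (if \<exists>b. s = c + b then Poly_Mapping.lookup p (s - c) else 0) else 0)"
    if "s \<in> S" for s
  proof (cases "\<exists>b. s = c + b")
    case True
    then obtain b where "s = c + b"
      by blast
    moreover have "mdeg s = D"
      using mdeg_S that .
    ultimately show ?thesis
      by (auto simp: lookup_hcomp mdeg_add)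
  qed simp
  then show ?thesis
    unfolding pairing_def lookup_single_mult by (auto cong: if_cong intro: sum.cong)
qed

lemma is_homogeneous_ideal_annihilator: "is_homogeneous_ideal n (annihilator n S :: 'k::field mpol set)"
  unfolding is_homogeneous_ideal_def is_ideal_def
proof (intro conjI ballI allI)
  fix p :: "'k mpol" assume p: "p \<in> annihilator n S"
  show "p + q \<in> annihilator n S" if "q \<in> annihilator n S" for q
    using p that by (auto simp: annihilator_def poly_ring_add distrib_left pairing_add)
  show "q * p \<in> annihilator n S" if "q \<in> poly_ring n" for q
    using p that by (auto simp: annihilator_def poly_ring_mult mult.assoc[symmetric])
  show "hcomp d p \<in> annihilator n S" for d
    using p by (simp add: in_annihilator_iff hcomp_in_poly_ring pairing_hcomp)
qed (auto simp: annihilator_def poly_ring_def)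

lemma const_one_notin_annihilator: "const 1 \<notin> (annihilator n S :: 'k::field mpol set)"
proof
  obtain s where "s \<in> S"
    using S_nonempty by blast
  then have "pairing S (monomial s * const 1 :: 'k mpol) = 1"
    by (simp add: const_def mult_single pairing_monomial finite_S)
  moreover assume "const 1 \<in> (annihilator n S :: 'k mpol set)"
  ultimately show False
    by (simp add: in_annihilator_iff)
qed

lemma mdeg_add_eq_if_pairing_neq_0:
  assumes "pairing S (monomial c * p) \<noteq> 0" "p \<in> hom_part n d"
  shows "mdeg c + d = D"
proof -
  obtain b where "c + b \<in> S" "b \<in> Poly_Mapping.keys p"
    using assms(1) by (rule pairing_monomial_mult_neq_0E)
  moreover have "mdeg b = d"
    using assms(2) \<open>b \<in> Poly_Mapping.keys p\<close> by (simp add: hom_part_def)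
  ultimately show ?thesis
    using mdeg_S[OF \<open>c + b \<in> S\<close>] by (simp add: mdeg_add)
qed

lemma hom_part_subset_annihilator:
  assumes "D < d"
  shows "hom_part n d \<subseteq> (annihilator n S :: 'k::field mpol set)"
proof
  fix p :: "'k mpol" assume p: "p \<in> hom_part n d"
  then have "pairing S (monomial c * p) = 0" for c
    using mdeg_add_eq_if_pairing_neq_0[OF _ p] assms by fastforce
  then show "p \<in> annihilator n S"
    using p by (simp add: in_annihilator_iff hom_part_def)
qed

lemma socle_lift_annihilator_below:
  assumes "d < D"
  shows "socle_lift n (annihilator n S :: 'k::field mpol set) d = annihilator n S \<inter> hom_part n d"
proof
  show "annihilator n S \<inter> hom_part n d \<subseteq> socle_lift n (annihilator n S :: 'k mpol set) d"
    using is_homogeneous_ideal_annihilator var_in_poly_ring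
    unfolding socle_lift_def is_homogeneous_ideal_def is_ideal_def by blast
  show "socle_lift n (annihilator n S :: 'k mpol set) d \<subseteq> annihilator n S \<inter> hom_part n d"
  proof
    fix f :: "'k mpol" assume "f \<in> socle_lift n (annihilator n S) d"
    then have f: "f \<in> hom_part n d" and var_f: "\<And>j. j < n \<Longrightarrow> var j * f \<in> annihilator n S"
      by (auto simp: socle_lift_def)
    have "pairing S (monomial c * f) = 0" for c
    proof (rule ccontr)
      assume nonzero: "pairing S (monomial c * f) \<noteq> 0"
      then have "mdeg c + d = D"
        using f by (rule mdeg_add_eq_if_pairing_neq_0)
      then have "c \<noteq> 0"
        using assms by auto
      then obtain j where j: "j \<in> Poly_Mapping.keys c"
        by (metis keys_eq_empty equals0I)
      obtain b where "c + b \<in> S"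
        using nonzero by (rule pairing_monomial_mult_neq_0E)
      moreover have "j \<in> Poly_Mapping.keys (c + b)"
        using j by (simp add: keys_add_nat)
      ultimately have "j < n"
        using keys_S by blast
      then have "pairing S (monomial (c - Poly_Mapping.single j 1) * (var j * f)) = 0"
        using var_f by (simp add: in_annihilator_iff)
      then show False
        using nonzero monomial_mult_eq_mult_var[OF j] by metis
    qed
    then show "f \<in> annihilator n S \<inter> hom_part n d"
      using f by (simp add: in_annihilator_iff hom_part_def)
  qed
qed

lemma socle_lift_annihilator_top: "socle_lift n (annihilator n S :: 'k::field mpol set) D = hom_part n D"
  using var_mult_in_hom_part[of _ n _ D] hom_part_subset_annihilator[of "Suc D"]
  unfolding socle_lift_def by auto

lemma contraction_eq_0_iff: "contraction S p = 0 \<longleftrightarrow> (\<forall>c. pairing S (monomial c * p) = 0)"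
  by (auto simp: lookup_contraction[OF finite_S] poly_mapping_eq_iff fun_eq_iff)

lemma hilb_annihilator:
  "hilb n (annihilator n S :: 'k::field mpol set) d = kdim (contraction S ` hom_part n d :: 'k mpol set)"
proof -
  have "{p \<in> hom_part n d. contraction S p = 0} = (annihilator n S :: 'k mpol set) \<inter> hom_part n d"
    by (auto simp: contraction_eq_0_iff in_annihilator_iff hom_part_def)
  moreover have "mpol.dim (hom_part n d :: 'k mpol set) =
      mpol.dim {p \<in> hom_part n d :: 'k mpol set. contraction S p = 0} +
      mpol.dim (contraction S ` hom_part n d :: 'k mpol set)"
    by (rule mpol.dim_eq_dim_kernel_add_dim_image[OF subspace_hom_part hom_part_subset_span_monomials
          _ linear_contraction[OF finite_S]]) simp
  ultimately show ?thesis
    unfolding hilb_def kdim_eq_dim by simp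
qed

lemma hilb_annihilator_above:
  assumes "D < d"
  shows "hilb n (annihilator n S :: 'k::field mpol set) d = 0"
proof -
  have "annihilator n S \<inter> hom_part n d = (hom_part n d :: 'k mpol set)"
    using hom_part_subset_annihilator[OF assms] by blast
  then show ?thesis
    by (simp add: hilb_def)
qed

lemma contraction_hom_part_subset_span:
  "contraction S ` hom_part n d \<subseteq> mpol.span (contraction S ` monomial ` monomials n d :: 'k::field mpol set)"
proof -
  interpret contraction: Vector_Spaces.linear smul smul "contraction S :: 'k mpol \<Rightarrow> 'k mpol"
    by (rule linear_contraction[OF finite_S])
  show ?thesis
    using contraction.spans_image[OF hom_part_subset_span_monomials] .
qed

lemma hilb_annihilator_le_card:
  assumes "finite T" and "\<And>a. a \<in> monomials n d \<Longrightarrow> contraction S (monomial a) \<in> mpol.span T"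
  shows "hilb n (annihilator n S :: 'k::field mpol set) d \<le> card (T :: 'k mpol set)"
proof -
  have "mpol.span (contraction S ` monomial ` monomials n d :: 'k mpol set) \<subseteq> mpol.span T"
    using assms(2) by (intro mpol.span_minimal) auto
  then have "contraction S ` hom_part n d \<subseteq> mpol.span T"
    using contraction_hom_part_subset_span by blast
  then show ?thesis
    unfolding hilb_annihilator kdim_eq_dim using mpol.dim_le_card assms(1) by blast
qed

lemma hilb_annihilator_le_card_monomials_complement:
  "hilb n (annihilator n S :: 'k::field mpol set) d \<le> card (monomials n (D - d))"
proof -
  have "hilb n (annihilator n S :: 'k mpol set) d \<le> card (monomial ` monomials n (D - d) :: 'k mpol set)"
  proof (rule hilb_annihilator_le_card)
    fix a assume a: "a \<in> monomials n d"
    have "c \<in> monomials n (D - d)" if "a + c \<in> S" for c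
      using mdeg_S[OF that] keys_S[OF that] a by (auto simp: monomials_def mdeg_add keys_add_nat)
    then show "contraction S (monomial a) \<in> mpol.span (monomial ` monomials n (D - d))"
      by (rule contraction_monomial_in_span[OF finite_S])
  qed simp
  also have "\<dots> \<le> card (monomials n (D - d))"
    by (rule card_image_le) simp
  finally show ?thesis .
qed

lemma card_le_hilb_annihilator:
  assumes P: "finite P" "fst ` P \<subseteq> monomials n d" "dual_pairs S P"
  shows "card P \<le> hilb n (annihilator n S :: 'k::field mpol set) d"
proof -
  \<comment> \<open>the coefficient of x^(snd q) in x^(fst p) o F is 1 if p = q and 0 otherwise\<close>
  define v :: "(nat \<Rightarrow>\<^sub>0 nat) \<times> (nat \<Rightarrow>\<^sub>0 nat) \<Rightarrow> 'k mpol"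
    where "v p = contraction S (monomial (fst p))" for p
  have lookup_v: "Poly_Mapping.lookup (v p) (snd q) = (if p = q then 1 else 0)" if "p \<in> P" "q \<in> P" for p q
    using P(3) that by (simp add: v_def lookup_contraction_monomial[OF finite_S] dual_pairs_def)
  have inj: "inj_on v P"
  proof (rule inj_onI)
    fix p q assume "p \<in> P" "q \<in> P" "v p = v q"
    then show "p = q"
      using lookup_v[of p q] lookup_v[of q q] by (auto split: if_splits)
  qed
  have "mpol.independent (v ` P)"
  proof (rule mpol.independent_if_scalars_zero)
    fix u x assume sum0: "(\<Sum>x\<in>v ` P. smul (u x) x) = 0" and "x \<in> v ` P"
    then obtain p where p: "p \<in> P" "x = v p"
      by blast
    have "0 = Poly_Mapping.lookup (\<Sum>x\<in>v ` P. smul (u x) x) (snd p)"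
      using sum0 by simp
    also have "\<dots> = (\<Sum>q\<in>P. u (v q) * Poly_Mapping.lookup (v q) (snd p))"
      by (simp add: lookup_sum lookup_smul sum.reindex[OF inj])
    also have "\<dots> = (\<Sum>q\<in>P. if q = p then u (v q) else 0)"
      by (rule sum.cong) (simp_all add: lookup_v p)
    also have "\<dots> = u x"
      using P(1) p by simp
    finally show "u x = 0" ..
  qed (use P(1) in simp)
  moreover have "v ` P \<subseteq> contraction S ` hom_part n d"
    using P(2) monomial_in_hom_part by (fastforce simp: v_def)
  ultimately have "card (v ` P) \<le> mpol.dim (contraction S ` hom_part n d :: 'k mpol set)"
    using mpol.card_le_dim_if_finitely_spanned[OF _ _ contraction_hom_part_subset_span] by simp
  then show ?thesis
    unfolding hilb_annihilator kdim_eq_dim using card_image[OF inj] by simp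
qed

lemma hilb_annihilator_0: "hilb n (annihilator n S :: 'k::field mpol set) 0 = 1"
proof (rule antisym)
  show "hilb n (annihilator n S :: 'k mpol set) 0 \<le> 1"
    using hilb_le_card_monomials[of n _ 0] by simp
  obtain s where "s \<in> S"
    using S_nonempty by blast
  then have "card {(0 :: nat \<Rightarrow>\<^sub>0 nat, s)} \<le> hilb n (annihilator n S :: 'k mpol set) 0"
    by (intro card_le_hilb_annihilator) (auto simp: dual_pairs_def)
  then show "1 \<le> hilb n (annihilator n S :: 'k mpol set) 0"
    by simp
qed

lemma hilb_annihilator_top: "hilb n (annihilator n S :: 'k::field mpol set) D = 1"
proof (rule antisym)
  show "hilb n (annihilator n S :: 'k mpol set) D \<le> 1"
    using hilb_annihilator_le_card_monomials_complement[of D] by simp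
  obtain s where "s \<in> S"
    using S_nonempty by blast
  then have "card {(s, 0 :: nat \<Rightarrow>\<^sub>0 nat)} \<le> hilb n (annihilator n S :: 'k mpol set) D"
    using S_subset by (intro card_le_hilb_annihilator) (auto simp: dual_pairs_def)
  then show "1 \<le> hilb n (annihilator n S :: 'k mpol set) D"
    by simp
qed

theorem graded_AG_annihilator: "graded_AG n (annihilator n S :: 'k::field mpol set)"
proof -
  let ?I = "annihilator n S :: 'k mpol set"
  have "kdim (socle_lift n ?I d) - kdim (?I \<inter> hom_part n d) = (if d = D then 1 else 0)" if "d < Suc D" for d
  proof (cases "d = D")
    case True
    then show ?thesis
      using hilb_annihilator_top by (simp add: socle_lift_annihilator_top hilb_def)
  next
    case False
    then have "socle_lift n ?I d = ?I \<inter> hom_part n d"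
      using that by (intro socle_lift_annihilator_below) simp
    then show ?thesis
      using False by simp
  qed
  then have "(\<Sum>d<Suc D. kdim (socle_lift n ?I d) - kdim (?I \<inter> hom_part n d)) = 1"
    by simp
  moreover have "hom_part n d \<subseteq> ?I" if "Suc D \<le> d" for d
    using that by (intro hom_part_subset_annihilator) simp
  ultimately show ?thesis
    unfolding graded_AG_def
    using is_homogeneous_ideal_annihilator const_one_notin_annihilator by blast
qed

end

section \<open>The form sum of x^t y_t over all cubic monomials x^t\<close>

locale cubic_inverse_system =
  fixes m r :: nat and y :: "(nat \<Rightarrow>\<^sub>0 nat) \<Rightarrow> nat"
  assumes m_pos: "0 < m" and y_bij: "bij_betw y (monomials m 3) {m..<r}"
begin

(* The variable y_t is x_(y t); y enumerates the cubic monomials in x_0, ..., x_(m-1) by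
   the indices m, ..., r - 1. form_support is the set of monomials x^t y_t of F. *)
definition form_support :: "(nat \<Rightarrow>\<^sub>0 nat) set" where
  "form_support = (\<lambda>t. t + Poly_Mapping.single (y t) 1) ` monomials m 3"

definition y_degree :: "(nat \<Rightarrow>\<^sub>0 nat) \<Rightarrow> nat" where
  "y_degree a = (\<Sum>k\<in>{m..<r}. Poly_Mapping.lookup a k)"

lemma y_range: "t \<in> monomials m 3 \<Longrightarrow> m \<le> y t \<and> y t < r"
  using bij_betw_apply[OF y_bij] by simp

lemma y_eq_iff: "t \<in> monomials m 3 \<Longrightarrow> t' \<in> monomials m 3 \<Longrightarrow> y t = y t' \<longleftrightarrow> t = t'"
  using bij_betw_imp_inj_on[OF y_bij] by (auto dest: inj_onD)

lemma r_eq: "r = m + card (monomials m 3)"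
proof -
  have "m < r"
    using y_range[OF single_in_monomials[OF m_pos]] by simp
  then show ?thesis
    using bij_betw_same_card[OF y_bij] by simp
qed

lemma y_degree_add: "y_degree (a + b) = y_degree a + y_degree b"
  unfolding y_degree_def by (simp add: lookup_add sum.distrib)

lemma y_degree_single: "y_degree (Poly_Mapping.single k j) = (if m \<le> k \<and> k < r then j else 0)"
  unfolding y_degree_def by (simp add: lookup_single when_def)

lemma y_degree_eq_0_iff:
  assumes "Poly_Mapping.keys a \<subseteq> {..<r}"
  shows "y_degree a = 0 \<longleftrightarrow> Poly_Mapping.keys a \<subseteq> {..<m}"
proof -
  have "y_degree a = 0 \<longleftrightarrow> (\<forall>k\<in>{m..<r}. k \<notin> Poly_Mapping.keys a)"
    unfolding y_degree_def by (simp add: in_keys_iff)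
  also have "\<dots> \<longleftrightarrow> Poly_Mapping.keys a \<subseteq> {..<m}"
    using assms by (auto simp: subset_iff)
  finally show ?thesis .
qed

lemma form_support_subset: "form_support \<subseteq> monomials r 4"
proof
  fix s assume "s \<in> form_support"
  then obtain t where t: "t \<in> monomials m 3" "s = t + Poly_Mapping.single (y t) 1"
    unfolding form_support_def by blast
  moreover have "Poly_Mapping.keys t \<subseteq> {..<r}"
    using t(1) r_eq by (auto simp: monomials_def)
  ultimately show "s \<in> monomials r 4"
    using y_range[OF t(1)] by (simp add: monomials_def mdeg_add keys_add_nat)
qed

lemma y_degree_form_support: "s \<in> form_support \<Longrightarrow> y_degree s = 1"
proof -
  assume "s \<in> form_support"
  then obtain t where t: "t \<in> monomials m 3" "s = t + Poly_Mapping.single (y t) 1"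
    unfolding form_support_def by blast
  then have "y_degree t = 0"
    using r_eq by (subst y_degree_eq_0_iff) (auto simp: monomials_def)
  then show ?thesis
    using t y_range[OF t(1)] by (simp add: y_degree_add y_degree_single)
qed

lemma add_single_in_form_support_iff:
  assumes "Poly_Mapping.keys u \<subseteq> {..<m}" "m \<le> j"
  shows "u + Poly_Mapping.single j 1 \<in> form_support \<longleftrightarrow> u \<in> monomials m 3 \<and> j = y u"
proof
  assume "u + Poly_Mapping.single j 1 \<in> form_support"
  then obtain t where t: "t \<in> monomials m 3" "u + Poly_Mapping.single j 1 = t + Poly_Mapping.single (y t) 1"
    unfolding form_support_def by blast
  have "Poly_Mapping.lookup (u + Poly_Mapping.single j 1) j = Poly_Mapping.lookup (t + Poly_Mapping.single (y t) 1) j"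
    using t(2) by simp
  moreover have "j \<notin> Poly_Mapping.keys u" "j \<notin> Poly_Mapping.keys t"
    using assms t(1) by (auto simp: monomials_def)
  ultimately have "y t = j"
    by (auto simp: lookup_add lookup_single when_def in_keys_iff split: if_splits)
  then show "u \<in> monomials m 3 \<and> j = y u"
    using t by simp
qed (auto simp: form_support_def)

lemma single_add_square_in_form_support_iff:
  assumes "i < m" "j < m"
  shows "Poly_Mapping.single i 1 + (Poly_Mapping.single j 2 + Poly_Mapping.single (y (Poly_Mapping.single j 3)) 1)
      \<in> form_support \<longleftrightarrow> i = j"
proof -
  let ?u = "Poly_Mapping.single i 1 + Poly_Mapping.single j (2::nat)"
  let ?cube = "Poly_Mapping.single j (3::nat)"
  have u: "?u \<in> monomials m 3" and cube: "?cube \<in> monomials m 3"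
    using assms by (simp_all add: monomials_def mdeg_add keys_add_nat)
  have "?u + Poly_Mapping.single (y ?cube) 1 \<in> form_support \<longleftrightarrow> y ?cube = y ?u"
    using add_single_in_form_support_iff[of ?u "y ?cube"] u y_range[OF cube]
    by (simp add: monomials_def)
  also have "\<dots> \<longleftrightarrow> ?u = Poly_Mapping.single j 1 + Poly_Mapping.single j 2"
    using y_eq_iff[OF u cube] by (auto simp: numeral_3_eq_3 simp flip: single_add)
  also have "\<dots> \<longleftrightarrow> i = j"
    by (simp add: single_eq_single_iff)
  finally show ?thesis
    by (simp add: add.assoc)
qed

sublocale form: monomial_inverse_system r 4 form_support
proof
  show "form_support \<subseteq> monomials r 4"
    by (rule form_support_subset)
  show "form_support \<noteq> {}"
    using single_in_monomials[OF m_pos, of 3] by (auto simp: form_support_def)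
qed

definition linear_dual_pairs :: "((nat \<Rightarrow>\<^sub>0 nat) \<times> (nat \<Rightarrow>\<^sub>0 nat)) set" where
  "linear_dual_pairs =
    (\<lambda>i. (Poly_Mapping.single i 1,
      Poly_Mapping.single i 2 + Poly_Mapping.single (y (Poly_Mapping.single i 3)) 1)) ` {..<m} \<union>
    (\<lambda>t. (Poly_Mapping.single (y t) 1, t)) ` monomials m 3"

lemma dual_pairs_linear_dual_pairs: "dual_pairs form_support linear_dual_pairs"
  unfolding dual_pairs_def
proof (intro ballI)
  let ?e = "\<lambda>i. Poly_Mapping.single i (1::nat)"
  let ?cube = "\<lambda>i. Poly_Mapping.single i (3::nat)"
  have cube: "i < m \<Longrightarrow> ?cube i \<in> monomials m 3" for i
    by (rule single_in_monomials)
  fix p q assume "p \<in> linear_dual_pairs" "q \<in> linear_dual_pairs"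
  then consider
      (xx) i j where "i < m" "j < m" "p = (?e i, Poly_Mapping.single i 2 + ?e (y (?cube i)))"
        "q = (?e j, Poly_Mapping.single j 2 + ?e (y (?cube j)))"
    | (xy) i t where "i < m" "t \<in> monomials m 3" "p = (?e i, Poly_Mapping.single i 2 + ?e (y (?cube i)))"
        "q = (?e (y t), t)"
    | (yx) t j where "t \<in> monomials m 3" "j < m" "p = (?e (y t), t)"
        "q = (?e j, Poly_Mapping.single j 2 + ?e (y (?cube j)))"
    | (yy) t t' where "t \<in> monomials m 3" "t' \<in> monomials m 3" "p = (?e (y t), t)" "q = (?e (y t'), t')"
    unfolding linear_dual_pairs_def by blast
  then show "fst p + snd q \<in> form_support \<longleftrightarrow> p = q"
  proof cases
    case xx
    then show ?thesis
      using single_add_square_in_form_support_iff by (auto simp: single_eq_single_iff)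
  next
    case xy
    have "y_degree (fst p + snd q) = 0"
      using xy r_eq by (subst y_degree_eq_0_iff) (auto simp: monomials_def keys_add_nat)
    moreover have "p \<noteq> q"
      using xy y_range[OF xy(2)] by (auto simp: single_eq_single_iff)
    ultimately show ?thesis
      using y_degree_form_support by force
  next
    case yx
    have "y_degree (fst p + snd q) = 2"
      using yx y_range cube
      by (simp add: y_degree_add y_degree_single)
    moreover have "p \<noteq> q"
      using yx y_range[OF yx(1)] by (auto simp: single_eq_single_iff)
    ultimately show ?thesis
      using y_degree_form_support by force
  next
    case yy
    then show ?thesis
      using add_single_in_form_support_iff[of t' "y t"] y_range y_eq_iff
      by (auto simp: add.commute monomials_def single_eq_single_iff)
  qed
qed

lemma card_linear_dual_pairs: "card linear_dual_pairs = r"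
proof -
  let ?X = "(\<lambda>i. (Poly_Mapping.single i (1::nat), Poly_Mapping.single i (2::nat) +
      Poly_Mapping.single (y (Poly_Mapping.single i 3)) 1)) ` {..<m}"
  let ?Y = "(\<lambda>t. (Poly_Mapping.single (y t) (1::nat), t)) ` monomials m 3"
  have "card ?X = m"
    by (subst card_image) (auto simp: inj_on_def single_eq_single_iff)
  moreover have "card ?Y = card (monomials m 3)"
    by (subst card_image) (auto simp: inj_on_def)
  moreover have "?X \<inter> ?Y = {}"
    using y_range by (force simp: single_eq_single_iff)
  ultimately show ?thesis
    unfolding linear_dual_pairs_def r_eq by (simp add: card_Un_disjoint)
qed

lemma linear_dual_pairs_subset: "linear_dual_pairs \<subseteq> monomials r 1 \<times> monomials r 3"
proof -
  have "Poly_Mapping.single i 2 + Poly_Mapping.single (y (Poly_Mapping.single i 3)) 1 \<in> monomials r 3"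
    if "i < m" for i
    using that y_range[OF single_in_monomials[OF that]]
    by (simp add: monomials_def mdeg_add keys_add_nat)
  moreover have "monomials m 3 \<subseteq> monomials r 3"
    using r_eq by (auto simp: monomials_def)
  ultimately show ?thesis
    using y_range r_eq by (auto simp: linear_dual_pairs_def intro!: single_in_monomials)
qed

lemma finite_linear_dual_pairs: "finite linear_dual_pairs"
  using linear_dual_pairs_subset by (rule finite_subset) simp

lemma hilb_degree_1: "hilb r (annihilator r form_support :: 'k::field mpol set) 1 = r"
proof (rule antisym)
  show "hilb r (annihilator r form_support :: 'k mpol set) 1 \<le> r"
    using hilb_le_card_monomials[of r _ 1] by (simp add: card_monomials)
  have "card linear_dual_pairs \<le> hilb r (annihilator r form_support :: 'k mpol set) 1"
    using linear_dual_pairs_subset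
    by (intro form.card_le_hilb_annihilator finite_linear_dual_pairs dual_pairs_linear_dual_pairs) auto
  then show "r \<le> hilb r (annihilator r form_support :: 'k mpol set) 1"
    by (simp add: card_linear_dual_pairs)
qed

lemma hilb_degree_3: "hilb r (annihilator r form_support :: 'k::field mpol set) 3 = r"
proof (rule antisym)
  show "hilb r (annihilator r form_support :: 'k mpol set) 3 \<le> r"
    using form.hilb_annihilator_le_card_monomials_complement[of 3] by (simp add: card_monomials)
  have "card (prod.swap ` linear_dual_pairs) \<le> hilb r (annihilator r form_support :: 'k mpol set) 3"
    using linear_dual_pairs_subset
    by (intro form.card_le_hilb_annihilator finite_imageI finite_linear_dual_pairs
        dual_pairs_swap dual_pairs_linear_dual_pairs) auto
  then show "r \<le> hilb r (annihilator r form_support :: 'k mpol set) 3"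
    by (simp add: card_image card_linear_dual_pairs)
qed

lemma cofactor_in_x_quadrics:
  assumes "a \<in> monomials r 2" "\<not> Poly_Mapping.keys a \<subseteq> {..<m}" "a + c \<in> form_support"
  shows "c \<in> monomials m 2"
proof -
  have "a + c \<in> monomials r 4"
    using assms(3) form_support_subset by blast
  then have "mdeg c = 2" "Poly_Mapping.keys c \<subseteq> {..<r}"
    using assms(1) by (auto simp: monomials_def mdeg_add keys_add_nat)
  moreover have "y_degree a \<noteq> 0"
    using assms(1,2) by (simp add: y_degree_eq_0_iff monomials_def)
  then have "y_degree c = 0"
    using y_degree_form_support[OF assms(3)] by (simp add: y_degree_add)
  ultimately show ?thesis
    by (simp add: y_degree_eq_0_iff monomials_def)
qed

lemma hilb_degree_2_le: "hilb r (annihilator r form_support :: 'k::field mpol set) 2 \<le> m * (m + 1)"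
proof -
  let ?A = "contraction form_support ` monomial ` monomials m 2 :: 'k mpol set"
  let ?B = "monomial ` monomials m 2 :: 'k mpol set"
  have "hilb r (annihilator r form_support :: 'k mpol set) 2 \<le> card (?A \<union> ?B)"
  proof (rule form.hilb_annihilator_le_card)
    fix a assume a: "a \<in> monomials r 2"
    show "contraction form_support (monomial a) \<in> mpol.span (?A \<union> ?B)"
    proof (cases "Poly_Mapping.keys a \<subseteq> {..<m}")
      case True
      then have "a \<in> monomials m 2"
        using a by (simp add: monomials_def)
      then show ?thesis
        by (intro mpol.span_base UnI1 imageI)
    next
      case False
      then have "contraction form_support (monomial a) \<in> mpol.span ?B"
        using a cofactor_in_x_quadrics
        by (intro contraction_monomial_in_span form.finite_S)
      then show ?thesis
        using mpol.span_mono[of ?B "?A \<union> ?B"] by blast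
    qed
  qed simp
  also have "\<dots> \<le> card ?A + card ?B"
    by (rule card_Un_le)
  also have "\<dots> \<le> card (monomials m 2) + card (monomials m 2)"
    by (intro add_mono card_image_le order.trans[OF card_image_le]) simp_all
  also have "\<dots> = m * (m + 1)"
    using two_mult_choose_two[of "m + 1"] by (simp add: card_monomials)
  finally show ?thesis .
qed

lemma AG_hilb_realizable_hilb_degree_2:
  "AG_hilb_realizable TYPE('k::field) r (hilb r (annihilator r form_support :: 'k mpol set) 2)"
  unfolding AG_hilb_realizable_def
  using form.graded_AG_annihilator form.hilb_annihilator_0 hilb_degree_1 hilb_degree_3
    form.hilb_annihilator_top form.hilb_annihilator_above by blast

end

lemma mu_le: "AG_hilb_realizable K r h \<Longrightarrow> mu K r \<le> h"
  unfolding mu_def by (rule Least_le)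

lemma ex_bij_betw_atLeastLessThan: "finite A \<Longrightarrow> \<exists>f. bij_betw f A {m..<m + card A}"
proof -
  assume "finite A"
  then obtain f where "bij_betw f A {0..<card A}"
    using ex_bij_betw_finite_nat by blast
  moreover have "bij_betw (\<lambda>k. m + k) {0..<card A} {m..<m + card A}"
    by (simp add: bij_betw_def inj_on_def image_add_atLeastLessThan' add.commute)
  ultimately show ?thesis
    using bij_betw_trans by blast
qed

lemma add_choose_three: "m + (m + 2 choose 3) = m * (m + 1) + (m choose 3)"
proof -
  have "m + 2 choose 3 = (m + 1 choose 2) + (m choose 2) + (m choose 3)"
    by (simp add: numeral_eq_Suc)
  moreover have "2 * (m + 1 choose 2) = (m + 1) * m" "2 * (m choose 2) = m * (m - 1)"
    using two_mult_choose_two[of "m + 1"] two_mult_choose_two[of m] by simp_all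
  ultimately show ?thesis
    by (cases m) (simp_all add: algebra_simps)
qed

theorem proposition3p4:
  fixes m :: nat
  assumes "m \<ge> 3"
  shows "delta TYPE('k::field_char_0) (m + (m + 2 choose 3)) \<ge> int (m choose 3)"
proof -
  let ?r = "m + (m + 2 choose 3)"
  obtain y where "bij_betw y (monomials m 3) {m..<m + card (monomials m 3)}"
    using ex_bij_betw_atLeastLessThan finite_monomials by blast
  then interpret cubic_inverse_system m ?r y
    using assms by unfold_locales (simp_all add: card_monomials)
  have "mu TYPE('k) ?r \<le> hilb ?r (annihilator ?r form_support :: 'k mpol set) 2"
    by (rule mu_le[OF AG_hilb_realizable_hilb_degree_2])
  also have "\<dots> \<le> m * (m + 1)"
    by (rule hilb_degree_2_le)
  finally have "int (mu TYPE('k) ?r) \<le> int (m * (m + 1))"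
    by (simp only: of_nat_le_iff)
  then show ?thesis
    unfolding delta_def add_choose_three of_nat_add by linarith
qed

end
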